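(* Let $V>0$, $r_d>0$, $k>\frac{1}{r_d}$ and $r_a=\sqrt{r_d^2-\frac{1}{k^2}}$. Consider the closed-loop system (on the region $r\ge r_a$) $$\dot r=-V\cos\theta,\qquad \dot\theta=k\left[V\cos\!\left(\pi-\sin^{-1}\!\left(\tfrac{r_a}{r}\right)\right)+V\cos\theta\right]+\frac{V\sin\theta}{r}.$$ Then $(r,\theta)=(r_d,\frac{\pi}{2})$ is a locally exponentially stable equilibrium of this system.
   Context: This system is the polar form ($r$ = distance from UAV to target, $\theta$ = bearing angle, i.e., the counterclockwise angle from the UAV-to-target vector to the heading) of unicycle dynamics $\dot x=V\cos\psi,\ \dot y=V\sin\psi,\ \dot\psi=\omega$ under the control $\omega=k[V\cos(\pi-\sin^{-1}(r_a/r))-\dot r]$ for $r\ge r_a$ (and $\omega=0$ for $r<r_a$), with $\dot r=-V\cos\theta$ substituted. $\sin^{-1}$ is the principal arcsine. *)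

theory Defs
  imports "HOL-Analysis.Analysis"
begin

definition cl_field :: "real \<Rightarrow> real \<Rightarrow> real \<Rightarrow> real \<times> real \<Rightarrow> real \<times> real" where
  "cl_field V k ra = (\<lambda>(r, \<theta>).
     (- V * cos \<theta>,
      (if r \<ge> ra then k * (V * cos (pi - arcsin (ra / r)) + V * cos \<theta>) else 0)
        + V * sin \<theta> / r))"

definition ode_solution :: "('a::real_normed_vector \<Rightarrow> 'a) \<Rightarrow> (real \<Rightarrow> 'a) \<Rightarrow> real set \<Rightarrow> bool" where
  "ode_solution f x S \<longleftrightarrow> (\<forall>t\<in>S. (x has_vector_derivative f (x t)) (at t within S))"

definition loc_exp_stable_eq :: "('a::real_normed_vector \<Rightarrow> 'a) \<Rightarrow> 'a \<Rightarrow> bool" where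
  "loc_exp_stable_eq f p \<longleftrightarrow> f p = 0 \<and>
     (\<exists>\<delta>>0. \<exists>c>0. \<exists>lam>0. \<forall>x0. norm (x0 - p) < \<delta> \<longrightarrow>
        (\<exists>x. x 0 = x0 \<and> ode_solution f x {0..}) \<and>
        (\<forall>x. x 0 = x0 \<and> ode_solution f x {0..} \<longrightarrow>
           (\<forall>t\<ge>0. norm (x t - p) \<le> c * norm (x0 - p) * exp (- lam * t))))"

end

theory Submission
  imports Defs
begin

text \<open>In the tracking error \<open>(a, b) = (r - rd, \<theta> - pi/2)\<close> the closed loop is, up to quadratic
  terms, \<open>a' = V b\<close>, \<open>b' = - V k\<^sup>2 a - k V b\<close>; the choice of \<open>ra\<close> is exactly what makes
  \<open>rd\<close> a double zero of the radial part of the remainder. The quadratic form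
  \<open>k\<^sup>2 a\<^sup>2 + k a b + b\<^sup>2\<close> decays at rate \<open>k V\<close> along the linear part, hence at rate \<open>k V / 2\<close>
  along the true field near the equilibrium. A Lyapunov function of this kind yields local
  exponential stability of any locally Lipschitz field: solutions starting close enough cannot
  leave the ball on which the decay estimate holds, and forward solutions exist because the
  field extended by composing with the metric projection onto that ball is globally
  Lipschitz and bounded, so Picard iteration converges on all of \<open>[0, \<infinity>)\<close>.\<close>

section \<open>Picard iteration for bounded globally Lipschitz fields\<close>

fun picard_iterate :: "('a::banach \<Rightarrow> 'a) \<Rightarrow> 'a \<Rightarrow> nat \<Rightarrow> real \<Rightarrow> 'a" where
  "picard_iterate G x0 0 t = x0"
| "picard_iterate G x0 (Suc n) t = x0 + integral {0..t} (\<lambda>s. G (picard_iterate G x0 n s))"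

definition picard_limit :: "('a::banach \<Rightarrow> 'a) \<Rightarrow> 'a \<Rightarrow> real \<Rightarrow> 'a" where
  "picard_limit G x0 t = lim (\<lambda>n. picard_iterate G x0 n t)"

lemma integral_exp_le:
  fixes a c t :: real
  assumes "a > 0" "c \<ge> 0" "t \<ge> 0"
  shows "integral {0..t} (\<lambda>s. c * exp (a * s)) \<le> c * exp (a * t) / a"
proof -
  have "((\<lambda>s. c * exp (a * s)) has_integral c * exp (a * t) / a - c * exp (a * 0) / a) {0..t}"
  proof (rule fundamental_theorem_of_calculus[OF assms(3)])
    fix x assume "x \<in> {0..t}"
    have "((\<lambda>s. c * exp (a * s) / a) has_real_derivative c * exp (a * x)) (at x within {0..t})"
      using assms by (auto intro!: derivative_eq_intros)
    then show "((\<lambda>s. c * exp (a * s) / a) has_vector_derivative c * exp (a * x)) (at x within {0..t})"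
      by (simp add: has_real_derivative_iff_has_vector_derivative)
  qed
  then have "integral {0..t} (\<lambda>s. c * exp (a * s)) = c * exp (a * t) / a - c * exp (a * 0) / a"
    by (rule integral_unique)
  then show ?thesis
    using assms by simp
qed

lemma lipschitz_on_realI:
  fixes u :: "real \<Rightarrow> 'a::real_normed_vector"
  assumes "0 \<le> C" "\<And>s t. s \<in> S \<Longrightarrow> t \<in> S \<Longrightarrow> s \<le> t \<Longrightarrow> norm (u t - u s) \<le> C * (t - s)"
  shows "C-lipschitz_on S u"
proof (rule lipschitz_onI)
  fix s t assume "s \<in> S" "t \<in> S"
  then show "dist (u s) (u t) \<le> C * dist s t"
    using assms(2)[of s t] assms(2)[of t s]
    by (cases "s \<le> t") (auto simp: dist_norm norm_minus_commute dist_real_def)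
qed fact

locale bounded_lipschitz_field =
  fixes G :: "'a::banach \<Rightarrow> 'a" and L M :: real
  assumes L_pos: "L > 0"
    and G_lipschitz: "L-lipschitz_on UNIV G"
    and G_bounded: "\<And>x. norm (G x) \<le> M"
begin

lemma bound_nonneg: "M \<ge> 0"
  using G_bounded[of 0] norm_ge_zero order_trans by blast

lemma norm_diff_le: "norm (G x - G y) \<le> L * norm (x - y)"
  using lipschitz_onD[OF G_lipschitz] by (simp add: dist_norm)

lemma continuous_on_field_comp:
  fixes u :: "real \<Rightarrow> 'a"
  assumes "continuous_on {0..} u" "0 \<le> a"
  shows "continuous_on {a..b} (\<lambda>s. G (u s))"
proof -
  have "continuous_on UNIV G"
    using G_lipschitz by (rule lipschitz_on_continuous_on)
  then have "continuous_on {0..} (\<lambda>s. G (u s))"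
    by (rule continuous_on_compose2[OF _ assms(1)]) auto
  then show ?thesis
    by (rule continuous_on_subset) (use assms(2) in auto)
qed

lemma integrable_field_comp:
  fixes u :: "real \<Rightarrow> 'a"
  shows "continuous_on {0..} u \<Longrightarrow> 0 \<le> a \<Longrightarrow> (\<lambda>s. G (u s)) integrable_on {a..b}"
  by (rule integrable_continuous_interval) (rule continuous_on_field_comp)

lemma picard_iterate_lipschitz: "M-lipschitz_on {0..} (picard_iterate G x0 n)"
proof (induction n)
  case 0
  show ?case
    by (rule lipschitz_on_transform[OF lipschitz_on_mono[OF lipschitz_on_constant order_refl bound_nonneg]]) simp
next
  case (Suc n)
  have cont: "continuous_on {0..} (picard_iterate G x0 n)"
    using Suc.IH by (rule lipschitz_on_continuous_on)
  show ?case
  proof (rule lipschitz_on_realI[OF bound_nonneg])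
    fix s t :: real assume "s \<in> {0..}" "t \<in> {0..}" "s \<le> t"
    then have st: "0 \<le> s" "s \<le> t" by auto
    have "integral {0..s} (\<lambda>u. G (picard_iterate G x0 n u)) + integral {s..t} (\<lambda>u. G (picard_iterate G x0 n u))
        = integral {0..t} (\<lambda>u. G (picard_iterate G x0 n u))"
      using st by (intro Henstock_Kurzweil_Integration.integral_combine integrable_field_comp cont) auto
    then have "picard_iterate G x0 (Suc n) t - picard_iterate G x0 (Suc n) s
        = integral {s..t} (\<lambda>u. G (picard_iterate G x0 n u))"
      by (simp add: algebra_simps)
    also have "norm \<dots> \<le> M * (t - s)"
      using st by (intro integral_bound continuous_on_field_comp cont G_bounded) auto
    finally show "norm (picard_iterate G x0 (Suc n) t - picard_iterate G x0 (Suc n) s) \<le> M * (t - s)" .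
  qed
qed

lemma continuous_on_picard_iterate: "continuous_on {0..} (picard_iterate G x0 n)"
  using picard_iterate_lipschitz by (rule lipschitz_on_continuous_on)

text \<open>The weight \<open>exp (2 * L * t)\<close> makes each Picard step contract by the factor \<open>1/2\<close>.\<close>
lemma picard_iterate_step_le:
  assumes "t \<ge> 0"
  shows "norm (picard_iterate G x0 (Suc n) t - picard_iterate G x0 n t) \<le> M / L * exp (2 * L * t) / 2 ^ Suc n"
  using assms
proof (induction n arbitrary: t)
  case 0
  have "norm (integral {0..t} (\<lambda>s. G x0)) \<le> M * t"
    using integral_bound[of 0 t "\<lambda>s. G x0" M] 0 G_bounded by auto
  also have "\<dots> \<le> M / L * exp (2 * L * t) / 2"
  proof -
    have "2 * L * t \<le> exp (2 * L * t)"
      using exp_ge_add_one_self[of "2 * L * t"] by linarith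
    then show ?thesis
      using L_pos bound_nonneg mult_left_mono[of "2 * L * t" "exp (2 * L * t)" M]
      by (simp add: field_simps)
  qed
  finally show ?case by simp
next
  case (Suc n)
  let ?d = "\<lambda>s. G (picard_iterate G x0 (Suc n) s) - G (picard_iterate G x0 n s)"
  have "(\<lambda>s. G (picard_iterate G x0 (Suc n) s)) integrable_on {0..t}"
    "(\<lambda>s. G (picard_iterate G x0 n s)) integrable_on {0..t}"
    by (intro integrable_field_comp continuous_on_picard_iterate order_refl)+
  from integral_diff[OF this]
  have "picard_iterate G x0 (Suc (Suc n)) t - picard_iterate G x0 (Suc n) t = integral {0..t} ?d"
    by simp
  also have "norm \<dots> \<le> integral {0..t} (\<lambda>s. (M / 2 ^ Suc n) * exp (2 * L * s))"
  proof (rule integral_norm_bound_integral)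
    show "?d integrable_on {0..t}"
      by (intro integrable_diff integrable_field_comp continuous_on_picard_iterate) simp_all
    show "(\<lambda>s. (M / 2 ^ Suc n) * exp (2 * L * s)) integrable_on {0..t}"
      by (intro integrable_continuous_interval continuous_intros)
    fix s assume s: "s \<in> {0..t}"
    have "norm (?d s) \<le> L * norm (picard_iterate G x0 (Suc n) s - picard_iterate G x0 n s)"
      by (rule norm_diff_le)
    also have "\<dots> \<le> L * (M / L * exp (2 * L * s) / 2 ^ Suc n)"
      using Suc.IH[of s] s L_pos by (intro mult_left_mono) auto
    finally show "norm (?d s) \<le> (M / 2 ^ Suc n) * exp (2 * L * s)"
      using L_pos by simp
  qed
  also have "\<dots> \<le> (M / 2 ^ Suc n) * exp (2 * L * t) / (2 * L)"
    using L_pos bound_nonneg Suc.prems by (intro integral_exp_le) auto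
  also have "\<dots> = M / L * exp (2 * L * t) / 2 ^ Suc (Suc n)"
    using L_pos by (simp add: field_simps)
  finally show ?case .
qed

lemma picard_iterate_dist_le:
  assumes "t \<ge> 0" "n \<le> m"
  shows "norm (picard_iterate G x0 m t - picard_iterate G x0 n t) \<le> M / L * exp (2 * L * t) / 2 ^ n"
proof -
  let ?C = "M / L * exp (2 * L * t)"
  have "norm (picard_iterate G x0 (n + j) t - picard_iterate G x0 n t) \<le> ?C * (1 / 2 ^ n - 1 / 2 ^ (n + j))" for j
  proof (induction j)
    case (Suc j)
    have "norm (picard_iterate G x0 (n + Suc j) t - picard_iterate G x0 n t)
        \<le> norm (picard_iterate G x0 (Suc (n + j)) t - picard_iterate G x0 (n + j) t)
          + norm (picard_iterate G x0 (n + j) t - picard_iterate G x0 n t)"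
      using norm_triangle_ineq[of "picard_iterate G x0 (Suc (n + j)) t - picard_iterate G x0 (n + j) t"
          "picard_iterate G x0 (n + j) t - picard_iterate G x0 n t"] by simp
    also have "\<dots> \<le> ?C / 2 ^ Suc (n + j) + ?C * (1 / 2 ^ n - 1 / 2 ^ (n + j))"
      using picard_iterate_step_le[OF assms(1), of x0 "n + j"] Suc.IH by linarith
    also have "\<dots> = ?C * (1 / 2 ^ n - 1 / 2 ^ (n + Suc j))"
      using L_pos by (simp add: field_simps power_add)
    finally show ?case .
  qed simp
  from this[of "m - n"] have "norm (picard_iterate G x0 m t - picard_iterate G x0 n t) \<le> ?C * (1 / 2 ^ n - 1 / 2 ^ m)"
    using assms(2) by simp
  also have "\<dots> \<le> ?C / 2 ^ n"
    using L_pos bound_nonneg by (simp add: field_simps)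
  finally show ?thesis .
qed

lemma picard_iterate_tendsto:
  assumes "t \<ge> 0"
  shows "(\<lambda>n. picard_iterate G x0 n t) \<longlonglongrightarrow> picard_limit G x0 t"
proof -
  have "Cauchy (\<lambda>n. picard_iterate G x0 n t)"
  proof (rule metric_CauchyI)
    fix e :: real assume e: "e > 0"
    let ?C = "M / L * exp (2 * L * t)"
    obtain N :: nat where "2 * ?C / e < 2 ^ N"
      using real_arch_pow[of 2] by auto
    then have N: "2 * ?C / 2 ^ N < e"
      using e L_pos by (simp add: field_simps)
    have "dist (picard_iterate G x0 m t) (picard_iterate G x0 n t) < e" if "m \<ge> N" "n \<ge> N" for m n
    proof -
      have "dist (picard_iterate G x0 m t) (picard_iterate G x0 n t)
          \<le> norm (picard_iterate G x0 m t - picard_iterate G x0 N t)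
          + norm (picard_iterate G x0 n t - picard_iterate G x0 N t)"
        using dist_triangle2[of "picard_iterate G x0 m t" "picard_iterate G x0 n t" "picard_iterate G x0 N t"]
        by (simp add: dist_norm)
      also have "\<dots> \<le> ?C / 2 ^ N + ?C / 2 ^ N"
        using picard_iterate_dist_le[OF assms] that by (intro add_mono) auto
      finally show ?thesis using N by simp
    qed
    then show "\<exists>N. \<forall>m\<ge>N. \<forall>n\<ge>N. dist (picard_iterate G x0 m t) (picard_iterate G x0 n t) < e"
      by blast
  qed
  then show ?thesis
    by (simp add: picard_limit_def Cauchy_convergent_iff convergent_LIMSEQ_iff)
qed

lemma picard_limit_dist_le:
  assumes "t \<ge> 0"
  shows "norm (picard_limit G x0 t - picard_iterate G x0 n t) \<le> M / L * exp (2 * L * t) / 2 ^ n"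
proof (rule LIMSEQ_le_const2)
  show "(\<lambda>m. norm (picard_iterate G x0 m t - picard_iterate G x0 n t))
      \<longlonglongrightarrow> norm (picard_limit G x0 t - picard_iterate G x0 n t)"
    by (intro tendsto_intros picard_iterate_tendsto assms)
  show "\<exists>N. \<forall>m\<ge>N. norm (picard_iterate G x0 m t - picard_iterate G x0 n t) \<le> M / L * exp (2 * L * t) / 2 ^ n"
    using picard_iterate_dist_le[OF assms] by blast
qed

lemma continuous_on_picard_limit: "continuous_on {0..} (picard_limit G x0)"
proof -
  have "M-lipschitz_on {0..} (picard_limit G x0)"
  proof (rule lipschitz_onI)
    fix s t :: real assume st: "s \<in> {0..}" "t \<in> {0..}"
    have "(\<lambda>n. dist (picard_iterate G x0 n s) (picard_iterate G x0 n t))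
        \<longlonglongrightarrow> dist (picard_limit G x0 s) (picard_limit G x0 t)"
      using st by (intro tendsto_dist picard_iterate_tendsto) auto
    moreover have "\<forall>n. dist (picard_iterate G x0 n s) (picard_iterate G x0 n t) \<le> M * dist s t"
      using lipschitz_onD[OF picard_iterate_lipschitz st] by blast
    ultimately show "dist (picard_limit G x0 s) (picard_limit G x0 t) \<le> M * dist s t"
      by (meson LIMSEQ_le_const2)
  qed (rule bound_nonneg)
  then show ?thesis by (rule lipschitz_on_continuous_on)
qed

lemma picard_limit_integral_eq:
  assumes t: "t \<ge> 0"
  shows "picard_limit G x0 t = x0 + integral {0..t} (\<lambda>s. G (picard_limit G x0 s))"
proof -
  let ?I = "\<lambda>n. integral {0..t} (\<lambda>s. G (picard_iterate G x0 n s))"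
  let ?J = "integral {0..t} (\<lambda>s. G (picard_limit G x0 s))"
  have "norm (?I n - ?J) \<le> M * exp (2 * L * t) * t / 2 ^ n" for n
  proof -
    have "norm (?I n - ?J) = norm (integral {0..t} (\<lambda>s. G (picard_iterate G x0 n s) - G (picard_limit G x0 s)))"
      by (simp add: integral_diff integrable_field_comp continuous_on_picard_iterate continuous_on_picard_limit)
    also have "\<dots> \<le> L * (M / L * exp (2 * L * t) / 2 ^ n) * (t - 0)"
    proof (intro integral_bound t continuous_on_diff continuous_on_field_comp
        continuous_on_picard_iterate continuous_on_picard_limit)
      fix s assume s: "s \<in> {0..t}"
      have "norm (G (picard_iterate G x0 n s) - G (picard_limit G x0 s))
          \<le> L * norm (picard_limit G x0 s - picard_iterate G x0 n s)"
        using norm_diff_le by (simp add: norm_minus_commute)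
      also have "\<dots> \<le> L * (M / L * exp (2 * L * s) / 2 ^ n)"
        using picard_limit_dist_le[of s _ n] s L_pos by (intro mult_left_mono) auto
      also have "\<dots> \<le> L * (M / L * exp (2 * L * t) / 2 ^ n)"
        using s L_pos bound_nonneg by (intro mult_left_mono divide_right_mono) auto
      finally show "norm (G (picard_iterate G x0 n s) - G (picard_limit G x0 s))
          \<le> L * (M / L * exp (2 * L * t) / 2 ^ n)" .
    qed simp_all
    finally show ?thesis
      using L_pos by simp
  qed
  then have "(\<lambda>n. ?I n - ?J) \<longlonglongrightarrow> 0"
    by (intro Lim_null_comparison[OF always_eventually
          LIMSEQ_divide_realpow_zero[of 2 "M * exp (2 * L * t) * t"]]) auto
  then have "?I \<longlonglongrightarrow> ?J"
    by (rule LIM_zero_cancel)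
  then have "(\<lambda>n. picard_iterate G x0 (Suc n) t) \<longlonglongrightarrow> x0 + ?J"
    using tendsto_add[OF tendsto_const] by simp
  moreover have "(\<lambda>n. picard_iterate G x0 (Suc n) t) \<longlonglongrightarrow> picard_limit G x0 t"
    using picard_iterate_tendsto[OF t] by (rule LIMSEQ_Suc)
  ultimately show ?thesis
    using LIMSEQ_unique by blast
qed

lemma ode_solution_picard_limit: "ode_solution G (picard_limit G x0) {0..}"
  unfolding ode_solution_def
proof
  fix t :: real assume t: "t \<in> {0..}"
  let ?X = "picard_limit G x0"
  have "((\<lambda>u. integral {0..u} (\<lambda>s. G (?X s))) has_vector_derivative G (?X t)) (at t within {0..t + 1})"
    using t by (intro integral_has_vector_derivative continuous_on_field_comp continuous_on_picard_limit) auto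
  then have "((\<lambda>u. x0 + integral {0..u} (\<lambda>s. G (?X s))) has_vector_derivative G (?X t)) (at t within {0..t + 1})"
    by (auto intro!: derivative_eq_intros)
  moreover have "at t within {0..t + 1} = at t within {0..}"
    by (rule at_within_nhd[where S = "{..<t + 1}"]) auto
  ultimately have deriv: "((\<lambda>u. x0 + integral {0..u} (\<lambda>s. G (?X s))) has_vector_derivative G (?X t)) (at t within {0..})"
    by simp
  show "(?X has_vector_derivative G (?X t)) (at t within {0..})"
    by (rule has_vector_derivative_transform[OF t _ deriv]) (metis atLeast_iff picard_limit_integral_eq)
qed

lemma picard_limit_0: "picard_limit G x0 0 = x0"
  using picard_limit_integral_eq[of 0] by simp

end

section \<open>Quadratic Lyapunov functions and local exponential stability\<close>

lemma continuous_on_ode_solution: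
  "ode_solution h x S \<Longrightarrow> continuous_on S x"
  unfolding ode_solution_def continuous_on_eq_continuous_within
  by (auto intro: has_vector_derivative_continuous)

lemma exp_decay_of_deriv_le:
  fixes w w' :: "real \<Rightarrow> real"
  assumes "T \<ge> 0" "continuous_on {0..T} w"
    and deriv: "\<And>s. 0 < s \<Longrightarrow> s < T \<Longrightarrow> (w has_real_derivative w' s) (at s)"
    and decay: "\<And>s. 0 < s \<Longrightarrow> s < T \<Longrightarrow> w' s \<le> - \<beta> * w s"
  shows "w T \<le> w 0 * exp (- \<beta> * T)"
proof -
  have "w T * exp (\<beta> * T) \<le> w 0 * exp (\<beta> * 0)"
  proof (rule DERIV_nonpos_imp_decreasing_open[OF assms(1)])
    fix s assume s: "0 < s" "s < T"
    have "((\<lambda>s. w s * exp (\<beta> * s)) has_real_derivative (w' s + \<beta> * w s) * exp (\<beta> * s)) (at s)"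
      using deriv[OF s] by (auto intro!: derivative_eq_intros simp: algebra_simps)
    moreover have "(w' s + \<beta> * w s) * exp (\<beta> * s) \<le> 0"
      using decay[OF s] by (simp add: mult_nonpos_nonneg)
    ultimately show "\<exists>y. ((\<lambda>s. w s * exp (\<beta> * s)) has_real_derivative y) (at s) \<and> y \<le> 0"
      by blast
  qed (intro continuous_intros assms(2))
  then show ?thesis
    by (simp add: exp_minus field_simps)
qed

lemma has_real_derivative_comp_vector:
  fixes W :: "'a::real_normed_vector \<Rightarrow> real"
  assumes "(W has_derivative W') (at (x t))" "(x has_vector_derivative v) (at t)"
  shows "((\<lambda>s. W (x s)) has_real_derivative W' v) (at t)"
proof -
  have "((\<lambda>s. W (x s)) has_derivative (\<lambda>r. W' (r *\<^sub>R v))) (at t)"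
    using has_derivative_compose[OF assms(2)[unfolded has_vector_derivative_def] assms(1)] .
  moreover have "(\<lambda>r. W' (r *\<^sub>R v)) = (*) (W' v)"
    using linear.scaleR[OF has_derivative_linear[OF assms(1)]] by (auto simp: fun_eq_iff)
  ultimately show ?thesis
    by (simp add: has_field_derivative_def)
qed

locale lyapunov_function =
  fixes h :: "'a::real_normed_vector \<Rightarrow> 'a" and W :: "'a \<Rightarrow> real" and W' :: "'a \<Rightarrow> 'a \<Rightarrow> real"
    and p :: 'a and m M \<rho> \<beta> :: real
  assumes W_deriv: "\<And>z. (W has_derivative W' z) (at z)"
    and W_lower: "\<And>z. m * (norm (z - p))\<^sup>2 \<le> W z"
    and W_upper: "\<And>z. W z \<le> M * (norm (z - p))\<^sup>2"
    and decrease: "\<And>z. z \<in> cball p \<rho> \<Longrightarrow> W' z (h z) \<le> - \<beta> * W z"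
    and m_pos: "0 < m" and m_le_M: "m \<le> M" and rho_nonneg: "0 \<le> \<rho>" and beta_nonneg: "0 \<le> \<beta>"
begin

lemma decay_while_in_ball:
  assumes sol: "ode_solution h x {0..}" and "T \<ge> 0"
    and inside: "\<And>s. 0 < s \<Longrightarrow> s < T \<Longrightarrow> norm (x s - p) \<le> \<rho>"
  shows "W (x T) \<le> W (x 0) * exp (- \<beta> * T)"
proof (rule exp_decay_of_deriv_le[OF \<open>T \<ge> 0\<close>])
  have "continuous_on UNIV W"
    using W_deriv has_derivative_continuous by (blast intro: continuous_at_imp_continuous_on)
  then have "continuous_on {0..} (\<lambda>t. W (x t))"
    by (rule continuous_on_compose2[OF _ continuous_on_ode_solution[OF sol]]) auto
  then show "continuous_on {0..T} (\<lambda>t. W (x t))"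
    by (rule continuous_on_subset) auto
  fix s assume s: "0 < s" "s < T"
  have "at s within {0..} = at s"
    using s by (intro at_within_interior) auto
  moreover have "(x has_vector_derivative h (x s)) (at s within {0..})"
    using sol s by (auto simp: ode_solution_def)
  ultimately have "(x has_vector_derivative h (x s)) (at s)"
    by simp
  then show "((\<lambda>t. W (x t)) has_real_derivative W' (x s) (h (x s))) (at s)"
    by (intro has_real_derivative_comp_vector W_deriv)
  show "W' (x s) (h (x s)) \<le> - \<beta> * W (x s)"
    using inside[OF s] by (intro decrease) (simp add: dist_norm norm_minus_commute)
qed

text \<open>A first exit from the open ball would happen at a time where \<open>W\<close> has not increased, yet
  \<open>W \<ge> m \<rho>\<^sup>2\<close> there.\<close>
lemma solution_stays_in_ball:
  assumes sol: "ode_solution h x {0..}" and start: "M * (norm (x 0 - p))\<^sup>2 < m * \<rho>\<^sup>2"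
    and "t \<ge> 0"
  shows "norm (x t - p) < \<rho>"
proof (rule ccontr)
  let ?N = "\<lambda>t. norm (x t - p)"
  assume "\<not> ?N t < \<rho>"
  define Z where "Z = {0..t} \<inter> ?N -` {\<rho>..}"
  have N_cont: "continuous_on {0..} ?N"
    by (intro continuous_intros continuous_on_ode_solution[OF sol])
  have "closed Z"
    unfolding Z_def by (intro continuous_closed_preimage continuous_on_subset[OF N_cont]) auto
  moreover have "bounded Z"
    unfolding Z_def by (rule bounded_subset[of "{0..t}"]) auto
  ultimately have "compact Z"
    by (simp add: compact_eq_bounded_closed)
  moreover have "Z \<noteq> {}"
    using \<open>\<not> ?N t < \<rho>\<close> \<open>t \<ge> 0\<close> by (auto simp: Z_def)
  ultimately obtain t1 where t1: "t1 \<in> Z" and first: "\<And>s. s \<in> Z \<Longrightarrow> t1 \<le> s"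
    by (meson compact_attains_inf)
  have "0 \<le> t1" "t1 \<le> t" "\<rho> \<le> ?N t1"
    using t1 unfolding Z_def by auto
  have before: "?N s \<le> \<rho>" if "0 < s" "s < t1" for s
  proof (rule ccontr)
    assume "\<not> ?N s \<le> \<rho>"
    then have "s \<in> Z"
      using that \<open>t1 \<le> t\<close> unfolding Z_def by auto
    then show False
      using first[of s] that by simp
  qed
  have "W (x 0) \<ge> 0"
    using W_lower[of "x 0"] m_pos by (meson order_trans zero_le_mult_iff zero_le_power2 less_imp_le)
  have "W (x t1) \<le> W (x 0) * exp (- \<beta> * t1)"
    by (rule decay_while_in_ball[OF sol \<open>0 \<le> t1\<close> before])
  also have "\<dots> \<le> W (x 0)"
    using \<open>W (x 0) \<ge> 0\<close> beta_nonneg \<open>0 \<le> t1\<close> by (intro mult_left_le) auto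
  also have "\<dots> < m * \<rho>\<^sup>2"
    using W_upper[of "x 0"] start by linarith
  also have "\<dots> \<le> m * (?N t1)\<^sup>2"
    using m_pos rho_nonneg \<open>\<rho> \<le> ?N t1\<close> by (intro mult_left_mono power_mono) auto
  also have "\<dots> \<le> W (x t1)"
    by (rule W_lower)
  finally show False
    by simp
qed

lemma solution_exponential_bound:
  assumes sol: "ode_solution h x {0..}" and start: "norm (x 0 - p) < \<rho> * sqrt (m / M)"
    and "t \<ge> 0"
  shows "norm (x t - p) \<le> sqrt (M / m) * norm (x 0 - p) * exp (- (\<beta> / 2) * t)"
proof -
  have "(norm (x 0 - p))\<^sup>2 < (\<rho> * sqrt (m / M))\<^sup>2"
    using start by (simp add: power_strict_mono)
  then have start': "M * (norm (x 0 - p))\<^sup>2 < m * \<rho>\<^sup>2"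
    using m_pos m_le_M by (simp add: power_mult_distrib field_simps)
  have "m * (norm (x t - p))\<^sup>2 \<le> W (x t)"
    by (rule W_lower)
  also have "\<dots> \<le> W (x 0) * exp (- \<beta> * t)"
    by (intro decay_while_in_ball[OF sol \<open>t \<ge> 0\<close>] less_imp_le solution_stays_in_ball[OF sol start']) simp
  also have "\<dots> \<le> M * (norm (x 0 - p))\<^sup>2 * exp (- \<beta> * t)"
    using W_upper[of "x 0"] by (rule mult_right_mono) simp
  finally have "(norm (x t - p))\<^sup>2 \<le> M / m * (norm (x 0 - p))\<^sup>2 * exp (- \<beta> * t)"
    using m_pos by (simp add: field_simps)
  also have "\<dots> = (sqrt (M / m) * norm (x 0 - p) * exp (- (\<beta> / 2) * t))\<^sup>2"
  proof -
    have "(exp (- (\<beta> / 2) * t))\<^sup>2 = exp (- \<beta> * t)"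
      by (simp add: power2_eq_square flip: exp_add)
    moreover have "(sqrt (M / m))\<^sup>2 = M / m"
      using m_pos m_le_M by simp
    ultimately show ?thesis
      by (simp add: power_mult_distrib)
  qed
  finally show ?thesis
    by (rule power2_le_imp_le) (use m_pos m_le_M in simp)
qed

end

lemma lipschitz_extension_cball:
  fixes f :: "'a::euclidean_space \<Rightarrow> 'b::real_normed_vector"
  assumes f: "L-lipschitz_on (cball p \<rho>) f" and "\<rho> \<ge> 0"
  obtains g where "L-lipschitz_on UNIV g" "\<And>z. norm (g z - f p) \<le> L * \<rho>"
    "\<And>z. z \<in> cball p \<rho> \<Longrightarrow> g z = f z"
proof
  let ?S = "cball p \<rho>"
  have S: "convex ?S" "closed ?S" "?S \<noteq> {}"
    using \<open>\<rho> \<ge> 0\<close> by auto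
  have proj: "closest_point ?S z \<in> ?S" for z
    by (rule closest_point_in_set[OF S(2,3)])
  have "1-lipschitz_on UNIV (closest_point ?S)"
    using closest_point_lipschitz[OF S] by (intro lipschitz_onI) auto
  moreover have "L-lipschitz_on (closest_point ?S ` UNIV) f"
    using proj by (intro lipschitz_on_subset[OF f]) auto
  ultimately have "(L * 1)-lipschitz_on UNIV (\<lambda>z. f (closest_point ?S z))"
    by (rule lipschitz_on_compose2)
  then show "L-lipschitz_on UNIV (\<lambda>z. f (closest_point ?S z))"
    by simp
  show "norm (f (closest_point ?S z) - f p) \<le> L * \<rho>" for z
  proof -
    have "norm (f (closest_point ?S z) - f p) \<le> L * dist (closest_point ?S z) p"
      using lipschitz_onD[OF f proj] \<open>\<rho> \<ge> 0\<close> by (simp add: dist_norm)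
    also have "\<dots> \<le> L * \<rho>"
      using proj[of z] lipschitz_on_nonneg[OF f] by (intro mult_left_mono) (auto simp: dist_commute)
    finally show ?thesis .
  qed
  show "f (closest_point ?S z) = f z" if "z \<in> ?S" for z
    using that by (simp add: closest_point_self)
qed

text \<open>Solutions of the extended field never leave the ball, so they solve the original one.\<close>
lemma exists_ode_solution_near_equilibrium:
  fixes f :: "'a::euclidean_space \<Rightarrow> 'a"
  assumes lyap: "\<And>h. (\<And>z. z \<in> cball p \<rho> \<Longrightarrow> h z = f z) \<Longrightarrow> lyapunov_function h W W' p m M \<rho> \<beta>"
    and "f p = 0" "L-lipschitz_on (cball p \<rho>) f" "\<rho> > 0"
    and start: "norm (x0 - p) < \<rho> * sqrt (m / M)"
  shows "\<exists>x. x 0 = x0 \<and> ode_solution f x {0..}"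
proof -
  obtain g where g_lip: "L-lipschitz_on UNIV g" and g_near: "\<And>z. norm (g z - f p) \<le> L * \<rho>"
    and g_eq: "\<And>z. z \<in> cball p \<rho> \<Longrightarrow> g z = f z"
    using lipschitz_extension_cball[OF assms(3) less_imp_le[OF \<open>\<rho> > 0\<close>]] by blast
  interpret g: lyapunov_function g W W' p m M \<rho> \<beta>
    using lyap g_eq by blast
  have "bounded_lipschitz_field g (L + 1) (L * \<rho>)"
  proof (unfold_locales)
    show "0 < L + 1"
      using lipschitz_on_nonneg[OF g_lip] by simp
    show "(L + 1)-lipschitz_on UNIV g"
      by (rule lipschitz_on_mono[OF g_lip order_refl]) simp
    show "norm (g z) \<le> L * \<rho>" for z
      using g_near[of z] \<open>f p = 0\<close> by simp
  qed
  then interpret bounded_lipschitz_field g "L + 1" "L * \<rho>" .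
  let ?X = "picard_limit g x0"
  have in_ball: "?X t \<in> cball p \<rho>" if "t \<ge> 0" for t
  proof -
    have "norm (?X t - p) \<le> sqrt (M / m) * norm (x0 - p) * exp (- (\<beta> / 2) * t)"
      using g.solution_exponential_bound[OF ode_solution_picard_limit[of x0] _ that] start picard_limit_0
      by simp
    also have "\<dots> \<le> sqrt (M / m) * norm (x0 - p)"
      using g.beta_nonneg g.m_pos g.m_le_M that by (intro mult_left_le) auto
    also have "\<dots> \<le> sqrt (M / m) * (\<rho> * sqrt (m / M))"
      using start g.m_pos g.m_le_M by (intro mult_left_mono) auto
    also have "\<dots> = \<rho>"
      using g.m_pos g.m_le_M by (simp add: real_sqrt_mult[symmetric])
    finally show ?thesis
      by (simp add: dist_norm norm_minus_commute)
  qed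
  have "ode_solution f ?X {0..}"
    unfolding ode_solution_def
  proof
    fix t :: real assume "t \<in> {0..}"
    then have "g (?X t) = f (?X t)"
      using in_ball g_eq by simp
    then show "(?X has_vector_derivative f (?X t)) (at t within {0..})"
      using ode_solution_picard_limit \<open>t \<in> {0..}\<close> unfolding ode_solution_def by metis
  qed
  then show ?thesis
    using picard_limit_0 by blast
qed

theorem loc_exp_stable_eqI:
  fixes f :: "'a::euclidean_space \<Rightarrow> 'a" and W :: "'a \<Rightarrow> real"
  assumes "f p = 0" and "L-lipschitz_on (cball p \<rho>) f" and "\<rho> > 0"
    and W_deriv: "\<And>z. (W has_derivative W' z) (at z)"
    and W_lower: "\<And>z. m * (norm (z - p))\<^sup>2 \<le> W z"
    and W_upper: "\<And>z. W z \<le> M * (norm (z - p))\<^sup>2"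
    and "0 < m" "m \<le> M"
    and decrease: "\<And>z. z \<in> cball p \<rho> \<Longrightarrow> W' z (f z) \<le> - \<beta> * W z"
    and "\<beta> > 0"
  shows "loc_exp_stable_eq f p"
proof -
  have lyap: "lyapunov_function h W W' p m M \<rho> \<beta>" if h_eq: "\<And>z. z \<in> cball p \<rho> \<Longrightarrow> h z = f z" for h
  proof (unfold_locales)
    fix z assume "z \<in> cball p \<rho>"
    then show "W' z (h z) \<le> - \<beta> * W z"
      using decrease h_eq by simp
  qed (use assms in auto)
  interpret f: lyapunov_function f W W' p m M \<rho> \<beta>
    by (rule lyap) simp
  have "\<rho> * sqrt (m / M) > 0" "sqrt (M / m) > 0" "\<beta> / 2 > 0"
    using assms by auto
  moreover have "(\<exists>x. x 0 = x0 \<and> ode_solution f x {0..}) \<and>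
      (\<forall>x. x 0 = x0 \<and> ode_solution f x {0..} \<longrightarrow>
        (\<forall>t\<ge>0. norm (x t - p) \<le> sqrt (M / m) * norm (x0 - p) * exp (- (\<beta> / 2) * t)))"
    if start: "norm (x0 - p) < \<rho> * sqrt (m / M)" for x0
  proof (intro conjI allI impI)
    show "\<exists>x. x 0 = x0 \<and> ode_solution f x {0..}"
      by (rule exists_ode_solution_near_equilibrium[OF lyap assms(1-3) start])
    fix x :: "real \<Rightarrow> 'a" and t :: real
    assume "x 0 = x0 \<and> ode_solution f x {0..}" "0 \<le> t"
    then show "norm (x t - p) \<le> sqrt (M / m) * norm (x0 - p) * exp (- (\<beta> / 2) * t)"
      using f.solution_exponential_bound[of x t] start by auto
  qed
  ultimately show ?thesis
    unfolding loc_exp_stable_eq_def using \<open>f p = 0\<close> by blast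
qed

lemma lipschitz_on_TimesI:
  fixes f :: "'a::metric_space \<times> 'b::metric_space \<Rightarrow> 'c::metric_space"
  assumes "\<And>y. y \<in> B \<Longrightarrow> L1-lipschitz_on A (\<lambda>x. f (x, y))"
    and "\<And>x. x \<in> A \<Longrightarrow> L2-lipschitz_on B (\<lambda>y. f (x, y))"
    and "0 \<le> L1" "0 \<le> L2"
  shows "(L1 + L2)-lipschitz_on (A \<times> B) f"
proof (rule lipschitz_onI)
  fix z w assume "z \<in> A \<times> B" "w \<in> A \<times> B"
  then obtain x y x' y' where zw: "z = (x, y)" "w = (x', y')" and "x \<in> A" "y \<in> B" "x' \<in> A" "y' \<in> B"
    by auto
  have "dist (f (x, y)) (f (x', y')) \<le> dist (f (x, y)) (f (x', y)) + dist (f (x', y)) (f (x', y'))"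
    by (rule dist_triangle)
  also have "\<dots> \<le> L1 * dist x x' + L2 * dist y y'"
    by (intro add_mono lipschitz_onD[OF assms(1)] lipschitz_onD[OF assms(2)]) fact+
  also have "\<dots> \<le> L1 * dist z w + L2 * dist z w"
    using dist_fst_le[of z w] dist_snd_le[of z w] zw assms(3,4) by (intro add_mono mult_left_mono) auto
  finally show "dist (f z) (f w) \<le> (L1 + L2) * dist z w"
    using zw by (simp add: algebra_simps)
qed (use assms(3,4) in simp)

lemma lipschitz_on_of_deriv_bound:
  fixes g g' :: "real \<Rightarrow> real"
  assumes "convex S" "\<And>z. z \<in> S \<Longrightarrow> (g has_real_derivative g' z) (at z)"
    and "\<And>z. z \<in> S \<Longrightarrow> \<bar>g' z\<bar> \<le> B" "0 \<le> B"
  shows "B-lipschitz_on S g"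
proof (rule lipschitz_onI)
  fix x y assume "x \<in> S" "y \<in> S"
  then show "dist (g x) (g y) \<le> B * dist x y"
    using field_differentiable_bound[of S g g' B x y] assms
    by (auto simp: dist_real_def has_field_derivative_at_within)
qed fact

lemma continuous_on_compact_abs_bounded:
  fixes g :: "'a::topological_space \<Rightarrow> real"
  assumes "compact S" "continuous_on S g"
  obtains B where "\<And>x. x \<in> S \<Longrightarrow> \<bar>g x\<bar> \<le> B"
  using compact_imp_bounded[OF compact_continuous_image[OF assms(2,1)]]
  by (auto simp: bounded_real)

lemma abs_le_second_deriv_bound:
  fixes q q' q'' :: "real \<Rightarrow> real"
  assumes "x0 \<in> {c..d}" "x \<in> {c..d}" "q x0 = 0" "q' x0 = 0"
    and q: "\<And>z. z \<in> {c..d} \<Longrightarrow> (q has_real_derivative q' z) (at z)"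
    and q': "\<And>z. z \<in> {c..d} \<Longrightarrow> (q' has_real_derivative q'' z) (at z)"
    and q'': "\<And>z. z \<in> {c..d} \<Longrightarrow> \<bar>q'' z\<bar> \<le> B"
  shows "\<bar>q x\<bar> \<le> B * (x - x0)\<^sup>2"
proof -
  let ?I = "{min x0 x..max x0 x}"
  have sub: "?I \<subseteq> {c..d}"
    using assms(1,2) by auto
  have "B \<ge> 0"
    using q''[OF assms(2)] by linarith
  have "B-lipschitz_on ?I q'"
  proof (rule lipschitz_on_of_deriv_bound[where g' = q''])
    fix w assume "w \<in> ?I"
    then have "w \<in> {c..d}" using sub by blast
    then show "(q' has_real_derivative q'' w) (at w)" "\<bar>q'' w\<bar> \<le> B"
      by (rule q', rule q'')
  qed (simp_all add: \<open>B \<ge> 0\<close>)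
  have "(B * \<bar>x - x0\<bar>)-lipschitz_on ?I q"
  proof (rule lipschitz_on_of_deriv_bound[where g' = q'])
    fix z assume z: "z \<in> ?I"
    show "(q has_real_derivative q' z) (at z)"
      using z sub by (intro q) auto
    have "dist (q' z) (q' x0) \<le> B * dist z x0"
      using z by (intro lipschitz_onD[OF \<open>B-lipschitz_on ?I q'\<close>]) auto
    also have "\<dots> \<le> B * \<bar>x - x0\<bar>"
      using z \<open>B \<ge> 0\<close> by (intro mult_left_mono) (auto simp: dist_real_def)
    finally show "\<bar>q' z\<bar> \<le> B * \<bar>x - x0\<bar>"
      using \<open>q' x0 = 0\<close> by (simp add: dist_real_def)
  qed (use \<open>B \<ge> 0\<close> in auto)
  then have "dist (q x) (q x0) \<le> B * \<bar>x - x0\<bar> * dist x x0"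
    by (rule lipschitz_onD) auto
  then show ?thesis
    using \<open>q x0 = 0\<close> by (simp add: dist_real_def power2_eq_square abs_mult_self_eq mult.assoc)
qed

lemma abs_sin_minus_self_le: "\<bar>sin b - b\<bar> \<le> (b::real)\<^sup>2"
proof -
  have "\<bar>sin b - b\<bar> \<le> 1 * (b - 0)\<^sup>2"
    by (rule abs_le_second_deriv_bound[of 0 "-\<bar>b\<bar>" "\<bar>b\<bar>" b "\<lambda>b. sin b - b" "\<lambda>b. cos b - 1" "\<lambda>b. - sin b"])
      (auto intro!: derivative_eq_intros)
  then show ?thesis by simp
qed

lemma abs_cos_minus_one_le: "\<bar>cos b - 1\<bar> \<le> (b::real)\<^sup>2"
proof -
  have "\<bar>cos b - 1\<bar> \<le> 1 * (b - 0)\<^sup>2"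
    by (rule abs_le_second_deriv_bound[of 0 "-\<bar>b\<bar>" "\<bar>b\<bar>" b "\<lambda>b. cos b - 1" "\<lambda>b. - sin b" "\<lambda>b. - cos b"])
      (auto intro!: derivative_eq_intros)
  then show ?thesis by simp
qed

lemma norm_real_pair_sq: "(norm z)\<^sup>2 = (fst z)\<^sup>2 + (snd z)\<^sup>2" for z :: "real \<times> real"
  by (cases z) (simp add: norm_Pair)

definition tracking_form :: "real \<Rightarrow> real \<times> real \<Rightarrow> real" where
  "tracking_form k z = k\<^sup>2 * (fst z)\<^sup>2 + k * fst z * snd z + (snd z)\<^sup>2"

definition tracking_form_deriv :: "real \<Rightarrow> real \<times> real \<Rightarrow> real \<times> real \<Rightarrow> real" where
  "tracking_form_deriv k z w = (2 * k\<^sup>2 * fst z + k * snd z) * fst w + (k * fst z + 2 * snd z) * snd w"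

lemma has_derivative_tracking_form:
  "((\<lambda>z. tracking_form k (z - p)) has_derivative tracking_form_deriv k (z - p)) (at z)"
  unfolding tracking_form_def tracking_form_deriv_def
  by (auto intro!: derivative_eq_intros ext simp: algebra_simps)

lemma tracking_form_bounds:
  fixes k :: real
  assumes "k > 0"
  shows "min (k\<^sup>2) 1 / 2 * (norm z)\<^sup>2 \<le> tracking_form k z"
    and "tracking_form k z \<le> (k\<^sup>2 + k + 1) * (norm z)\<^sup>2"
proof -
  obtain a b where z: "z = (a, b)" by (cases z)
  have "2 * \<bar>k * a * b\<bar> \<le> k\<^sup>2 * a\<^sup>2 + b\<^sup>2"
    using sum_squares_bound[of "\<bar>k * a\<bar>" "\<bar>b\<bar>"] by (simp add: abs_mult power_mult_distrib)
  moreover have "min (k\<^sup>2) 1 * a\<^sup>2 \<le> k\<^sup>2 * a\<^sup>2" "min (k\<^sup>2) 1 * b\<^sup>2 \<le> 1 * b\<^sup>2"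
    by (intro mult_right_mono; simp)+
  ultimately show "min (k\<^sup>2) 1 / 2 * (norm z)\<^sup>2 \<le> tracking_form k z"
    using abs_ge_minus_self[of "k * a * b"] by (simp add: z tracking_form_def norm_Pair algebra_simps)
  have "2 * \<bar>a * b\<bar> \<le> a\<^sup>2 + b\<^sup>2"
    using sum_squares_bound[of "\<bar>a\<bar>" "\<bar>b\<bar>"] by (simp add: abs_mult)
  then have "k * a * b \<le> k * (a\<^sup>2 + b\<^sup>2)"
    using assms abs_ge_self[of "a * b"] mult_left_mono[of "a * b" "a\<^sup>2 + b\<^sup>2" k] by (simp add: mult.assoc)
  moreover have "(k\<^sup>2 + k + 1) * (norm z)\<^sup>2 = k\<^sup>2 * a\<^sup>2 + k\<^sup>2 * b\<^sup>2 + k * (a\<^sup>2 + b\<^sup>2) + a\<^sup>2 + b\<^sup>2"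
    by (simp add: z norm_Pair algebra_simps)
  moreover have "0 \<le> k\<^sup>2 * b\<^sup>2" "0 \<le> a\<^sup>2"
    by simp_all
  ultimately show "tracking_form k z \<le> (k\<^sup>2 + k + 1) * (norm z)\<^sup>2"
    unfolding z tracking_form_def fst_conv snd_conv by linarith
qed

text \<open>Along the linearised field \<open>(V b, - V k\<^sup>2 a - k V b)\<close> the form decays at the rate \<open>k V\<close>;
  quadratically small perturbations cost at most half of that near the origin.\<close>
lemma tracking_form_deriv_perturbed_le:
  fixes k V C1 C2 R1 R2 :: real and z :: "real \<times> real"
  assumes "k > 0" "V > 0" "0 \<le> C1" "0 \<le> C2"
    and R1: "\<bar>R1\<bar> \<le> C1 * (norm z)\<^sup>2" and R2: "\<bar>R2\<bar> \<le> C2 * (norm z)\<^sup>2"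
    and small: "norm z * ((2 * k\<^sup>2 + k) * C1 + (k + 2) * C2) \<le> k * V * min (k\<^sup>2) 1 / 4"
  shows "tracking_form_deriv k z (V * snd z + R1, - V * k\<^sup>2 * fst z - k * V * snd z + R2)
    \<le> - (k * V / 2) * tracking_form k z"
proof -
  obtain a b where z: "z = (a, b)" by (cases z)
  let ?n = "norm z"
  have a: "\<bar>a\<bar> \<le> ?n" and b: "\<bar>b\<bar> \<le> ?n"
    using real_le_rsqrt[of "\<bar>a\<bar>" "a\<^sup>2 + b\<^sup>2"] real_le_rsqrt[of "\<bar>b\<bar>" "a\<^sup>2 + b\<^sup>2"] by (simp_all add: z norm_Pair)
  have "\<bar>2 * k\<^sup>2 * a + k * b\<bar> \<le> 2 * k\<^sup>2 * \<bar>a\<bar> + k * \<bar>b\<bar>"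
    using abs_triangle_ineq[of "2 * k\<^sup>2 * a" "k * b"] \<open>k > 0\<close> by (simp add: abs_mult)
  also have "\<dots> \<le> 2 * k\<^sup>2 * ?n + k * ?n"
    using a b \<open>k > 0\<close> by (intro add_mono mult_left_mono) auto
  also have "\<dots> = (2 * k\<^sup>2 + k) * ?n"
    by (simp add: algebra_simps)
  finally have e1: "\<bar>2 * k\<^sup>2 * a + k * b\<bar> \<le> (2 * k\<^sup>2 + k) * ?n" .
  have "\<bar>k * a + 2 * b\<bar> \<le> k * \<bar>a\<bar> + 2 * \<bar>b\<bar>"
    using abs_triangle_ineq[of "k * a" "2 * b"] \<open>k > 0\<close> by (simp add: abs_mult)
  also have "\<dots> \<le> k * ?n + 2 * ?n"
    using a b \<open>k > 0\<close> by (intro add_mono mult_left_mono) auto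
  also have "\<dots> = (k + 2) * ?n"
    by (simp add: algebra_simps)
  finally have e2: "\<bar>k * a + 2 * b\<bar> \<le> (k + 2) * ?n" .
  have "\<bar>(2 * k\<^sup>2 * a + k * b) * R1\<bar> + \<bar>(k * a + 2 * b) * R2\<bar>
      \<le> (2 * k\<^sup>2 + k) * ?n * (C1 * ?n\<^sup>2) + (k + 2) * ?n * (C2 * ?n\<^sup>2)"
    unfolding abs_mult using e1 e2 R1 R2 \<open>k > 0\<close> by (intro add_mono mult_mono) auto
  also have "\<dots> = ?n * ((2 * k\<^sup>2 + k) * C1 + (k + 2) * C2) * ?n\<^sup>2"
    by (simp add: algebra_simps)
  also have "\<dots> \<le> (k * V / 2) * (min (k\<^sup>2) 1 / 2 * ?n\<^sup>2)"
    using mult_right_mono[OF small, of "?n\<^sup>2"] by simp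
  also have "\<dots> \<le> (k * V / 2) * tracking_form k z"
    using tracking_form_bounds(1)[OF \<open>k > 0\<close>] \<open>k > 0\<close> \<open>V > 0\<close> by (intro mult_left_mono) auto
  finally have "(2 * k\<^sup>2 * a + k * b) * R1 + (k * a + 2 * b) * R2 \<le> (k * V / 2) * tracking_form k z"
    by (rule order_trans[OF add_mono[OF abs_ge_self abs_ge_self]])
  then have bound: "- (k * V) * tracking_form k z + ((2 * k\<^sup>2 * a + k * b) * R1 + (k * a + 2 * b) * R2)
      \<le> - (k * V / 2) * tracking_form k z"
    by linarith
  have "tracking_form_deriv k z (V * snd z + R1, - V * k\<^sup>2 * fst z - k * V * snd z + R2)
      = - (k * V) * tracking_form k z + ((2 * k\<^sup>2 * a + k * b) * R1 + (k * a + 2 * b) * R2)"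
    by (simp add: z tracking_form_def tracking_form_deriv_def algebra_simps power2_eq_square)
  also note bound
  finally show ?thesis .
qed

section \<open>The closed-loop field near the circle of radius \<open>rd\<close>\<close>

lemma cl_field_eq:
  fixes V k ra r \<theta> :: real
  assumes "0 \<le> ra" "ra < r"
  shows "cl_field V k ra (r, \<theta>) = (- V * cos \<theta>, (V * sin \<theta> - k * V * sqrt (r\<^sup>2 - ra\<^sup>2)) / r + k * V * cos \<theta>)"
proof -
  have "r > 0"
    using assms by linarith
  have "-1 \<le> ra / r" "ra / r \<le> 1"
    using assms \<open>r > 0\<close> by (auto simp: field_simps)
  moreover have "1 - (ra / r)\<^sup>2 = (r\<^sup>2 - ra\<^sup>2) / r\<^sup>2"
    using \<open>r > 0\<close> by (simp add: field_simps)
  ultimately have "cos (arcsin (ra / r)) = sqrt (r\<^sup>2 - ra\<^sup>2) / r"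
    using \<open>r > 0\<close> by (simp add: cos_arcsin real_sqrt_divide)
  then show ?thesis
    using assms \<open>r > 0\<close> unfolding cl_field_def by (simp add: field_simps)
qed

lemma has_real_derivative_radial:
  fixes A c ra r :: real
  assumes "0 \<le> ra" "ra < r"
  shows "((\<lambda>r. (A - c * sqrt (r\<^sup>2 - ra\<^sup>2)) / r) has_real_derivative
    - (A + c * ra\<^sup>2 / sqrt (r\<^sup>2 - ra\<^sup>2)) / r\<^sup>2) (at r)"
proof -
  have "r > 0" "r\<^sup>2 - ra\<^sup>2 > 0"
    using assms by (auto simp: power_strict_mono)
  moreover have "sqrt (r\<^sup>2 - ra\<^sup>2) * sqrt (r\<^sup>2 - ra\<^sup>2) = r\<^sup>2 - ra\<^sup>2"
    using \<open>r\<^sup>2 - ra\<^sup>2 > 0\<close> by simp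
  ultimately show ?thesis
    by (auto intro!: derivative_eq_intros simp: field_simps power2_eq_square)
qed

lemma has_real_derivative_radial_deriv:
  fixes A c ra r :: real
  assumes "0 \<le> ra" "ra < r"
  shows "((\<lambda>r. - (A + c * ra\<^sup>2 / sqrt (r\<^sup>2 - ra\<^sup>2)) / r\<^sup>2) has_real_derivative
    c * ra\<^sup>2 / (sqrt (r\<^sup>2 - ra\<^sup>2) ^ 3 * r) + 2 * (A + c * ra\<^sup>2 / sqrt (r\<^sup>2 - ra\<^sup>2)) / r ^ 3) (at r)"
proof -
  have pos: "r > 0" "r\<^sup>2 - ra\<^sup>2 > 0"
    using assms by (auto simp: power_strict_mono)
  define u where "u = sqrt (r\<^sup>2 - ra\<^sup>2)"
  have "u > 0" and u3: "sqrt (r\<^sup>2 - ra\<^sup>2) ^ 3 = u * u\<^sup>2"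
    using pos by (simp_all add: u_def power3_eq_cube power2_eq_square)
  show ?thesis
    using pos \<open>u > 0\<close>
    by (auto intro!: derivative_eq_intros simp: u3 simp flip: u_def)
      (simp add: field_simps power2_eq_square power3_eq_cube eval_nat_numeral)
qed

lemma cl_field_lipschitz_on_strip:
  fixes V k ra r1 r2 :: real
  assumes "0 \<le> ra" "ra < r1"
  obtains L where "L-lipschitz_on ({r1..r2} \<times> UNIV) (cl_field V k ra)"
proof -
  have r: "0 < r" "ra < r" "0 < r\<^sup>2 - ra\<^sup>2" if "r \<in> {r1..r2}" for r
    using that assms by (auto simp: power_strict_mono)
  define F where "F r \<theta> = (V * sin \<theta> - k * V * sqrt (r\<^sup>2 - ra\<^sup>2)) / r + k * V * cos \<theta>" for r \<theta>
  define Fr where "Fr r = (\<bar>V\<bar> + \<bar>k * V\<bar> * ra\<^sup>2 / sqrt (r\<^sup>2 - ra\<^sup>2)) / r\<^sup>2" for r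
  have "continuous_on {r1..r2} Fr"
    unfolding Fr_def by (intro continuous_intros) (auto dest: r)
  then obtain Br where Br: "\<And>r. r \<in> {r1..r2} \<Longrightarrow> \<bar>Fr r\<bar> \<le> Br"
    using continuous_on_compact_abs_bounded[OF compact_Icc] by blast
  have F_r: "(max Br 0)-lipschitz_on {r1..r2} (\<lambda>r. F r \<theta>)" for \<theta>
  proof (rule lipschitz_on_of_deriv_bound[where g' = "\<lambda>r. - (V * sin \<theta> + k * V * ra\<^sup>2 / sqrt (r\<^sup>2 - ra\<^sup>2)) / r\<^sup>2 + 0"])
    fix r assume "r \<in> {r1..r2}"
    note r = r[OF this] Br[OF this]
    show "((\<lambda>r. F r \<theta>) has_real_derivative - (V * sin \<theta> + k * V * ra\<^sup>2 / sqrt (r\<^sup>2 - ra\<^sup>2)) / r\<^sup>2 + 0) (at r)"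
      unfolding F_def using assms r by (intro DERIV_add has_real_derivative_radial DERIV_const) auto
    have "\<bar>V * sin \<theta>\<bar> \<le> \<bar>V\<bar>"
      by (simp add: abs_mult mult_left_le)
    moreover have "\<bar>k * V * ra\<^sup>2 / sqrt (r\<^sup>2 - ra\<^sup>2)\<bar> = \<bar>k * V\<bar> * ra\<^sup>2 / sqrt (r\<^sup>2 - ra\<^sup>2)"
      using r by (simp add: abs_mult abs_divide)
    ultimately have "\<bar>V * sin \<theta> + k * V * ra\<^sup>2 / sqrt (r\<^sup>2 - ra\<^sup>2)\<bar> \<le> \<bar>V\<bar> + \<bar>k * V\<bar> * ra\<^sup>2 / sqrt (r\<^sup>2 - ra\<^sup>2)"
      by (smt (verit) abs_triangle_ineq)
    then have "\<bar>V * sin \<theta> + k * V * ra\<^sup>2 / sqrt (r\<^sup>2 - ra\<^sup>2)\<bar> / r\<^sup>2 \<le> Fr r"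
      unfolding Fr_def by (rule divide_right_mono) simp
    then have "\<bar>- (V * sin \<theta> + k * V * ra\<^sup>2 / sqrt (r\<^sup>2 - ra\<^sup>2)) / r\<^sup>2 + 0\<bar> \<le> Fr r"
      by (simp only: add_0_right abs_divide abs_minus_cancel abs_power2)
    then show "\<bar>- (V * sin \<theta> + k * V * ra\<^sup>2 / sqrt (r\<^sup>2 - ra\<^sup>2)) / r\<^sup>2 + 0\<bar> \<le> max Br 0"
      using r by linarith
  qed auto
  have F_\<theta>: "(\<bar>V\<bar> / r1 + \<bar>k * V\<bar>)-lipschitz_on UNIV (\<lambda>\<theta>. F r \<theta>)" if "r \<in> {r1..r2}" for r
  proof (rule lipschitz_on_of_deriv_bound[where g' = "\<lambda>\<theta>. V * cos \<theta> / r - k * V * sin \<theta>"])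
    fix \<theta> :: real
    show "((\<lambda>\<theta>. F r \<theta>) has_real_derivative V * cos \<theta> / r - k * V * sin \<theta>) (at \<theta>)"
      unfolding F_def using r[OF that] by (auto intro!: derivative_eq_intros)
    have "\<bar>V * cos \<theta> / r\<bar> \<le> \<bar>V\<bar> / r"
      using r[OF that] by (simp add: abs_mult abs_divide divide_right_mono mult_left_le)
    also have "\<dots> \<le> \<bar>V\<bar> / r1"
      using r[OF that] that assms by (intro divide_left_mono) auto
    finally have "\<bar>V * cos \<theta> / r\<bar> \<le> \<bar>V\<bar> / r1" .
    moreover have "\<bar>k * V * sin \<theta>\<bar> \<le> \<bar>k * V\<bar>"
      by (simp add: abs_mult mult_left_le)
    ultimately show "\<bar>V * cos \<theta> / r - k * V * sin \<theta>\<bar> \<le> \<bar>V\<bar> / r1 + \<bar>k * V\<bar>"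
      by linarith
  qed (use assms in auto)
  have cos_lip: "\<bar>V\<bar>-lipschitz_on UNIV (\<lambda>\<theta>. V * cos \<theta>)"
    by (rule lipschitz_on_of_deriv_bound[where g' = "\<lambda>\<theta>. - V * sin \<theta>"])
      (auto intro!: derivative_eq_intros simp: abs_mult mult_left_le)
  have "(0 + \<bar>V\<bar>)-lipschitz_on ({r1..r2} \<times> UNIV) (\<lambda>z. - V * cos (snd z))"
    by (rule lipschitz_on_TimesI) (simp_all add: lipschitz_on_constant cos_lip)
  moreover have "(max Br 0 + (\<bar>V\<bar> / r1 + \<bar>k * V\<bar>))-lipschitz_on ({r1..r2} \<times> UNIV) (\<lambda>z. F (fst z) (snd z))"
    using assms by (intro lipschitz_on_TimesI) (auto simp: F_r F_\<theta>)
  ultimately obtain L where "L-lipschitz_on ({r1..r2} \<times> UNIV) (\<lambda>z. (- V * cos (snd z), F (fst z) (snd z)))"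
    using lipschitz_on_Pair by blast
  moreover have "cl_field V k ra z = (- V * cos (snd z), F (fst z) (snd z))" if "z \<in> {r1..r2} \<times> UNIV" for z
  proof -
    obtain r \<theta> where z: "z = (r, \<theta>)" by (cases z)
    then have "r \<in> {r1..r2}"
      using that by simp
    then show ?thesis
      using cl_field_eq[OF assms(1) r(2)] by (simp add: z F_def)
  qed
  ultimately have "L-lipschitz_on ({r1..r2} \<times> UNIV) (cl_field V k ra)"
    by (rule lipschitz_on_transform)
  then show thesis
    by (rule that)
qed

lemma cball_real_pair_abs_le:
  fixes z :: "real \<times> real"
  assumes "z \<in> cball (a, b) \<rho>"
  shows "\<bar>fst z - a\<bar> \<le> \<rho>" "\<bar>snd z - b\<bar> \<le> \<rho>"
  using assms dist_fst_le[of z "(a, b)"] dist_snd_le[of z "(a, b)"]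
  by (auto simp: dist_real_def dist_commute)

context
  fixes V rd k ra :: real
  assumes V_pos: "V > 0" and rd_pos: "rd > 0" and k_gt: "k > 1 / rd"
    and ra_eq: "ra = sqrt (rd\<^sup>2 - 1 / k\<^sup>2)"
begin

lemma k_pos: "k > 0"
  using k_gt rd_pos by (meson divide_pos_pos less_trans zero_less_one)

lemma inv_k_sq_less: "1 / k\<^sup>2 < rd\<^sup>2"
proof -
  have "1 < k * rd"
    using k_gt rd_pos by (simp add: field_simps)
  then have "1 < (k * rd)\<^sup>2"
    by (rule one_less_power) simp
  then show ?thesis
    using k_pos by (simp add: field_simps power_mult_distrib)
qed

lemma ra_nonneg: "0 \<le> ra"
  using inv_k_sq_less by (simp add: ra_eq)

lemma ra_sq: "ra\<^sup>2 = rd\<^sup>2 - 1 / k\<^sup>2"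
  using inv_k_sq_less by (simp add: ra_eq)

lemma ra_less_rd: "ra < rd"
  using ra_sq ra_nonneg rd_pos k_pos by (smt (verit) power_mono zero_less_divide_1_iff zero_less_power)

lemma sqrt_rd_ra: "sqrt (rd\<^sup>2 - ra\<^sup>2) = 1 / k"
  using ra_sq k_pos by (simp add: real_sqrt_divide)

lemma cl_field_equilibrium: "cl_field V k ra (rd, pi / 2) = 0"
  using cl_field_eq[OF ra_nonneg ra_less_rd, of V k "pi / 2"] k_pos by (simp add: sqrt_rd_ra zero_prod_def)

lemma cl_field_lipschitz_on_cball:
  obtains L where "L-lipschitz_on (cball (rd, pi / 2) ((rd - ra) / 2)) (cl_field V k ra)"
proof -
  let ?r1 = "(rd + ra) / 2" and ?r2 = "rd + (rd - ra) / 2"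
  have "ra < ?r1"
    using ra_less_rd by simp
  then obtain L where L: "L-lipschitz_on ({?r1..?r2} \<times> UNIV) (cl_field V k ra)"
    by (rule cl_field_lipschitz_on_strip[OF ra_nonneg])
  have "cball (rd, pi / 2) ((rd - ra) / 2) \<subseteq> {?r1..?r2} \<times> UNIV"
  proof
    fix z assume "z \<in> cball (rd, pi / 2) ((rd - ra) / 2)"
    then have bound: "\<bar>fst z - rd\<bar> \<le> (rd - ra) / 2"
      by (rule cball_real_pair_abs_le)
    have "?r1 \<le> fst z"
      using abs_le_D2[OF bound] by (simp add: field_simps)
    moreover have "fst z \<le> ?r2"
      using abs_le_D1[OF bound] by (simp add: field_simps)
    ultimately show "z \<in> {?r1..?r2} \<times> UNIV"
      by (simp add: mem_Times_iff)
  qed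
  then show thesis
    by (rule that[OF lipschitz_on_subset[OF L]])
qed

text \<open>The only place where the value of \<open>ra\<close> matters: it makes \<open>rd\<close> a double zero of the
  radial remainder of the linearisation.\<close>
lemma radial_remainder_le:
  obtains B where "0 \<le> B" "\<And>r. r \<in> {(rd + ra) / 2 .. rd + (rd - ra) / 2} \<Longrightarrow>
    \<bar>(V - k * V * sqrt (r\<^sup>2 - ra\<^sup>2)) / r + V * k\<^sup>2 * (r - rd)\<bar> \<le> B * (r - rd)\<^sup>2"
proof -
  let ?I = "{(rd + ra) / 2 .. rd + (rd - ra) / 2}"
  have r: "0 \<le> ra" "ra < r" "0 < r" "0 < r\<^sup>2 - ra\<^sup>2" if "r \<in> ?I" for r
    using that ra_nonneg ra_less_rd by (auto simp: power_strict_mono)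
  define q' where "q' r = - (V + k * V * ra\<^sup>2 / sqrt (r\<^sup>2 - ra\<^sup>2)) / r\<^sup>2 + V * k\<^sup>2" for r
  define q'' where "q'' r = k * V * ra\<^sup>2 / (sqrt (r\<^sup>2 - ra\<^sup>2) ^ 3 * r)
    + 2 * (V + k * V * ra\<^sup>2 / sqrt (r\<^sup>2 - ra\<^sup>2)) / r ^ 3 + 0" for r
  have "continuous_on ?I q''"
    unfolding q''_def by (intro continuous_intros) (auto dest: r)
  then obtain B where B: "\<And>r. r \<in> ?I \<Longrightarrow> \<bar>q'' r\<bar> \<le> B"
    using continuous_on_compact_abs_bounded[OF compact_Icc] by blast
  define q where "q r = (V - k * V * sqrt (r\<^sup>2 - ra\<^sup>2)) / r + V * k\<^sup>2 * (r - rd)" for r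
  have "\<bar>q r\<bar> \<le> max B 0 * (r - rd)\<^sup>2" if "r \<in> ?I" for r
  proof (rule abs_le_second_deriv_bound[of rd "(rd + ra) / 2" "rd + (rd - ra) / 2" r q q' q''])
    show "rd \<in> ?I" "r \<in> ?I"
      using that ra_less_rd by auto
    show "q rd = 0"
      using k_pos by (simp add: q_def sqrt_rd_ra)
    have "1 + k\<^sup>2 * ra\<^sup>2 = k\<^sup>2 * rd\<^sup>2"
      using k_pos by (simp add: ra_sq field_simps)
    have "V + k * V * ra\<^sup>2 * k = V * (1 + k\<^sup>2 * ra\<^sup>2)"
      by (simp add: algebra_simps power2_eq_square)
    also have "\<dots> = V * k\<^sup>2 * rd\<^sup>2"
      by (simp add: \<open>1 + k\<^sup>2 * ra\<^sup>2 = k\<^sup>2 * rd\<^sup>2\<close>)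
    finally have "V + k * V * ra\<^sup>2 * k = V * k\<^sup>2 * rd\<^sup>2" .
    then show "q' rd = 0"
      using k_pos rd_pos unfolding q'_def sqrt_rd_ra by (simp add: field_simps)
    fix z assume "z \<in> ?I"
    note z = r[OF this]
    have "((\<lambda>r. V * k\<^sup>2 * (r - rd)) has_real_derivative V * k\<^sup>2) (at z)"
      by (auto intro!: derivative_eq_intros)
    then show "(q has_real_derivative q' z) (at z)"
      unfolding q_def q'_def by (rule DERIV_add[OF has_real_derivative_radial[OF z(1,2)]])
    show "(q' has_real_derivative q'' z) (at z)"
      unfolding q'_def q''_def by (rule DERIV_add[OF has_real_derivative_radial_deriv[OF z(1,2)] DERIV_const])
    show "\<bar>q'' z\<bar> \<le> max B 0"
      using B[OF \<open>z \<in> ?I\<close>] by linarith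
  qed
  then show thesis
    by (intro that[of "max B 0"]) (auto simp: q_def)
qed

lemma cl_field_linearization:
  obtains C1 C2 where "0 \<le> C1" "0 \<le> C2"
    and "\<And>z. z \<in> cball (rd, pi / 2) ((rd - ra) / 2) \<Longrightarrow>
      \<bar>fst (cl_field V k ra z) - V * snd (z - (rd, pi / 2))\<bar> \<le> C1 * (norm (z - (rd, pi / 2)))\<^sup>2"
    and "\<And>z. z \<in> cball (rd, pi / 2) ((rd - ra) / 2) \<Longrightarrow>
      \<bar>snd (cl_field V k ra z) - (- V * k\<^sup>2 * fst (z - (rd, pi / 2)) - k * V * snd (z - (rd, pi / 2)))\<bar>
        \<le> C2 * (norm (z - (rd, pi / 2)))\<^sup>2"
proof -
  let ?r1 = "(rd + ra) / 2"
  obtain B where "0 \<le> B" and radial: "\<And>r. r \<in> {?r1 .. rd + (rd - ra) / 2} \<Longrightarrow>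
      \<bar>(V - k * V * sqrt (r\<^sup>2 - ra\<^sup>2)) / r + V * k\<^sup>2 * (r - rd)\<bar> \<le> B * (r - rd)\<^sup>2"
    using radial_remainder_le by blast
  have "?r1 > 0"
    using ra_nonneg rd_pos by simp
  show thesis
  proof (rule that[of V "B + V / ?r1 + k * V"])
    show "0 \<le> V" "0 \<le> B + V / ?r1 + k * V"
      using V_pos k_pos \<open>0 \<le> B\<close> \<open>?r1 > 0\<close> by simp_all
    fix z assume z: "z \<in> cball (rd, pi / 2) ((rd - ra) / 2)"
    obtain r \<theta> where z_eq: "z = (r, \<theta>)" by (cases z)
    define a where "a = r - rd"
    define b where "b = \<theta> - pi / 2"
    have "\<bar>r - rd\<bar> \<le> (rd - ra) / 2"
      using cball_real_pair_abs_le(1)[OF z] by (simp only: z_eq fst_conv)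
    then have r: "r \<in> {?r1 .. rd + (rd - ra) / 2}" "r \<ge> ?r1" "ra < r"
      using ra_less_rd unfolding abs_le_iff by (auto simp: field_simps)
    have norm_sq: "(norm (z - (rd, pi / 2)))\<^sup>2 = a\<^sup>2 + b\<^sup>2"
      by (simp add: z_eq a_def b_def norm_real_pair_sq)
    have field: "cl_field V k ra z = (V * sin b, (V * cos b - k * V * sqrt (r\<^sup>2 - ra\<^sup>2)) / r - k * V * sin b)"
      using cl_field_eq[OF ra_nonneg r(3)] by (simp add: z_eq b_def cos_diff sin_diff)
    have "\<bar>sin b - b\<bar> \<le> b\<^sup>2" "\<bar>cos b - 1\<bar> \<le> b\<^sup>2"
      by (rule abs_sin_minus_self_le, rule abs_cos_minus_one_le)
    have "\<bar>V * sin b - V * b\<bar> \<le> V * (a\<^sup>2 + b\<^sup>2)"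
      using \<open>\<bar>sin b - b\<bar> \<le> b\<^sup>2\<close> V_pos
      by (simp add: abs_mult flip: right_diff_distrib) (simp add: mult_left_mono add_increasing)
    then show "\<bar>fst (cl_field V k ra z) - V * snd (z - (rd, pi / 2))\<bar> \<le> V * (norm (z - (rd, pi / 2)))\<^sup>2"
      unfolding field norm_sq by (simp add: z_eq b_def)
    have "snd (cl_field V k ra z) - (- V * k\<^sup>2 * a - k * V * b)
      = ((V - k * V * sqrt (r\<^sup>2 - ra\<^sup>2)) / r + V * k\<^sup>2 * (r - rd)) + V * (cos b - 1) / r - k * V * (sin b - b)"
      using \<open>?r1 > 0\<close> r by (simp add: field a_def field_simps)
    also have "\<bar>\<dots>\<bar> \<le> B * a\<^sup>2 + V / ?r1 * b\<^sup>2 + k * V * b\<^sup>2"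
    proof -
      have "\<bar>V * (cos b - 1) / r\<bar> \<le> V / ?r1 * b\<^sup>2"
      proof -
        have "\<bar>V * (cos b - 1) / r\<bar> = V * \<bar>cos b - 1\<bar> / r"
          using V_pos r \<open>?r1 > 0\<close> by (simp add: abs_mult abs_divide)
        also have "\<dots> \<le> V * b\<^sup>2 / ?r1"
          using V_pos r \<open>?r1 > 0\<close> \<open>\<bar>cos b - 1\<bar> \<le> b\<^sup>2\<close>
          by (intro frac_le mult_left_mono) auto
        finally show ?thesis by (simp add: ac_simps)
      qed
      moreover have "\<bar>k * V * (sin b - b)\<bar> \<le> k * V * b\<^sup>2"
        using V_pos k_pos \<open>\<bar>sin b - b\<bar> \<le> b\<^sup>2\<close> by (simp add: abs_mult)
      moreover have "\<bar>(V - k * V * sqrt (r\<^sup>2 - ra\<^sup>2)) / r + V * k\<^sup>2 * (r - rd)\<bar> \<le> B * a\<^sup>2"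
        using radial[OF r(1)] by (simp add: a_def)
      ultimately show ?thesis
        using abs_triangle_ineq4[of "(V - k * V * sqrt (r\<^sup>2 - ra\<^sup>2)) / r + V * k\<^sup>2 * (r - rd) + V * (cos b - 1) / r"
            "k * V * (sin b - b)"]
          abs_triangle_ineq[of "(V - k * V * sqrt (r\<^sup>2 - ra\<^sup>2)) / r + V * k\<^sup>2 * (r - rd)" "V * (cos b - 1) / r"]
        by linarith
    qed
    also have "\<dots> \<le> (B + V / ?r1 + k * V) * (a\<^sup>2 + b\<^sup>2)"
      using \<open>0 \<le> B\<close> V_pos k_pos \<open>?r1 > 0\<close> by (simp add: algebra_simps add_mono mult_left_mono)
    finally show "\<bar>snd (cl_field V k ra z) - (- V * k\<^sup>2 * fst (z - (rd, pi / 2)) - k * V * snd (z - (rd, pi / 2)))\<bar>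
        \<le> (B + V / ?r1 + k * V) * (norm (z - (rd, pi / 2)))\<^sup>2"
      unfolding norm_sq by (simp add: z_eq a_def b_def)
  qed
qed

lemma cl_field_tracking_form_decrease:
  obtains \<rho> where "0 < \<rho>" "\<rho> \<le> (rd - ra) / 2"
    and "\<And>z. z \<in> cball (rd, pi / 2) \<rho> \<Longrightarrow>
      tracking_form_deriv k (z - (rd, pi / 2)) (cl_field V k ra z)
        \<le> - (k * V / 2) * tracking_form k (z - (rd, pi / 2))"
proof -
  obtain C1 C2 where C: "0 \<le> C1" "0 \<le> C2"
    and R1: "\<And>z. z \<in> cball (rd, pi / 2) ((rd - ra) / 2) \<Longrightarrow>
      \<bar>fst (cl_field V k ra z) - V * snd (z - (rd, pi / 2))\<bar> \<le> C1 * (norm (z - (rd, pi / 2)))\<^sup>2"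
    and R2: "\<And>z. z \<in> cball (rd, pi / 2) ((rd - ra) / 2) \<Longrightarrow>
      \<bar>snd (cl_field V k ra z) - (- V * k\<^sup>2 * fst (z - (rd, pi / 2)) - k * V * snd (z - (rd, pi / 2)))\<bar>
        \<le> C2 * (norm (z - (rd, pi / 2)))\<^sup>2"
    using cl_field_linearization by blast
  define C where "C = (2 * k\<^sup>2 + k) * C1 + (k + 2) * C2"
  define \<epsilon> where "\<epsilon> = k * V * min (k\<^sup>2) 1 / 4"
  have "C \<ge> 0" "\<epsilon> > 0"
    using C k_pos V_pos by (simp_all add: C_def \<epsilon>_def)
  show thesis
  proof (rule that[of "min ((rd - ra) / 2) (\<epsilon> / (C + 1))"])
    show "0 < min ((rd - ra) / 2) (\<epsilon> / (C + 1))"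
      using ra_less_rd \<open>C \<ge> 0\<close> \<open>\<epsilon> > 0\<close> by simp
    show "min ((rd - ra) / 2) (\<epsilon> / (C + 1)) \<le> (rd - ra) / 2"
      by (rule min.cobounded1)
    fix z assume z: "z \<in> cball (rd, pi / 2) (min ((rd - ra) / 2) (\<epsilon> / (C + 1)))"
    let ?e = "z - (rd, pi / 2)"
    have z0: "z \<in> cball (rd, pi / 2) ((rd - ra) / 2)" and "norm ?e \<le> \<epsilon> / (C + 1)"
      using z by (auto simp: dist_norm norm_minus_commute)
    then have "norm ?e * C \<le> \<epsilon>"
      using \<open>C \<ge> 0\<close> by (smt (verit) mult_left_mono norm_ge_zero pos_le_divide_eq)
    then have small: "norm ?e * ((2 * k\<^sup>2 + k) * C1 + (k + 2) * C2) \<le> k * V * min (k\<^sup>2) 1 / 4"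
      by (simp add: C_def \<epsilon>_def)
    define R1 where "R1 = fst (cl_field V k ra z) - V * snd ?e"
    define R2 where "R2 = snd (cl_field V k ra z) - (- V * k\<^sup>2 * fst ?e - k * V * snd ?e)"
    have "cl_field V k ra z = (V * snd ?e + R1, - V * k\<^sup>2 * fst ?e - k * V * snd ?e + R2)"
      by (simp add: R1_def R2_def)
    then show "tracking_form_deriv k ?e (cl_field V k ra z) \<le> - (k * V / 2) * tracking_form k ?e"
      using tracking_form_deriv_perturbed_le[OF k_pos V_pos C R1[OF z0, folded R1_def] R2[OF z0, folded R2_def] small]
      by simp
  qed
qed

end

theorem theorem2:
  fixes V rd k ra :: real
  assumes "V > 0" and "rd > 0" and "k > 1 / rd"
    and "ra = sqrt (rd\<^sup>2 - 1 / k\<^sup>2)"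
  shows "loc_exp_stable_eq (cl_field V k ra) (rd, pi / 2)"
proof -
  let ?p = "(rd, pi / 2) :: real \<times> real"
  have k: "k > 0"
    by (rule k_pos[OF assms])
  obtain \<rho> where "0 < \<rho>" "\<rho> \<le> (rd - ra) / 2" and decrease: "\<And>z. z \<in> cball ?p \<rho> \<Longrightarrow>
      tracking_form_deriv k (z - ?p) (cl_field V k ra z) \<le> - (k * V / 2) * tracking_form k (z - ?p)"
    using cl_field_tracking_form_decrease[OF assms] by blast
  obtain L where "L-lipschitz_on (cball ?p ((rd - ra) / 2)) (cl_field V k ra)"
    using cl_field_lipschitz_on_cball[OF assms] by blast
  then have lip: "L-lipschitz_on (cball ?p \<rho>) (cl_field V k ra)"
    by (rule lipschitz_on_subset) (use \<open>\<rho> \<le> (rd - ra) / 2\<close> in auto)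
  show ?thesis
  proof (rule loc_exp_stable_eqI[where L = L and \<rho> = \<rho> and \<beta> = "k * V / 2"
        and W = "\<lambda>z. tracking_form k (z - ?p)" and W' = "\<lambda>z. tracking_form_deriv k (z - ?p)"
        and m = "min (k\<^sup>2) 1 / 2" and M = "k\<^sup>2 + k + 1"])
    show "min (k\<^sup>2) 1 / 2 \<le> k\<^sup>2 + k + 1"
      using k min.cobounded2[of "k\<^sup>2" 1] zero_le_power2[of k] by linarith
  qed (use k \<open>V > 0\<close> \<open>0 < \<rho>\<close> lip decrease cl_field_equilibrium[OF assms] has_derivative_tracking_form
      tracking_form_bounds[OF k] in auto)
qed

end
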